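(* Let $h:\mathbb{R}\to[0,+\infty)$ be a super-multiplicative function (i.e. $h(xy)\ge h(x)h(y)$ for all $x,y\in\mathbb{R}$) such that $h(t)\ge t$ for all $t$ and $h(1)=1$. Let $f:(a,b)\to\mathbb{R}$ be $h$-mid-convex, i.e. $$f\Big(\frac{x+y}{2}\Big)\le h\Big(\frac12\Big)\big(f(x)+f(y)\big)\quad\text{for all } x,y\in(a,b).$$ Suppose there is a set $M\subseteq(a,b)$ of positive Lebesgue measure such that $f$ is bounded above on $M$. Then $f$ is continuous. *)

theory Defs
  imports "HOL-Analysis.Analysis"
begin

definition super_multiplicative :: "(real \<Rightarrow> real) \<Rightarrow> bool" where
  "super_multiplicative h \<longleftrightarrow> (\<forall>x y. h (x * y) \<ge> h x * h y)"

definition h_mid_convex :: "(real \<Rightarrow> real) \<Rightarrow> real set \<Rightarrow> (real \<Rightarrow> real) \<Rightarrow> bool" where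
  "h_mid_convex h I f \<longleftrightarrow>
     (\<forall>x\<in>I. \<forall>y\<in>I. f ((x + y) / 2) \<le> h (1/2) * (f x + f y))"

end

theory Submission
  imports Defs
begin

(* Since h(1/2) h(2) <= h(1) = 1 while h(1/2) >= 1/2 and h(2) >= 2, we get h(1/2) = 1/2, so f is
   midpoint convex. By Vitali covering some ball B meets M in more than 3/4 of its length; then for
   z near the centre of B, the set M \<inter> B and its reflection 2z - (M \<inter> B) are too large to be
   disjoint, so z is a midpoint of two points of M. Hence the midpoints of M fill a ball on which f
   is bounded by the bound on M. Iterated midpoint convexity carries such a bound, on a ball shrunk
   by the factor 2^-n, towards any point, and a bound K on ball x d gives
   |f y - f x| <= 2^-n (K - f x) for |y - x| < 2^-n d, i.e. continuity at x. *)

lemma super_multiplicative_half_eq: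
  assumes "super_multiplicative h" and ge: "\<And>t. t \<le> h t" and "h 1 = 1"
  shows "h (1/2) = 1/2"
proof -
  have "h 2 * h (1/2) \<le> h (2 * (1/2))"
    using assms(1) unfolding super_multiplicative_def by blast
  then have "h 2 * h (1/2) \<le> 1"
    using assms(3) by simp
  moreover have "2 * h (1/2) \<le> h 2 * h (1/2)"
    using ge[of 2] ge[of "1/2"] by (intro mult_right_mono) auto
  ultimately show ?thesis
    using ge[of "1/2"] by linarith
qed

definition midpoint_convex_on :: "real set \<Rightarrow> (real \<Rightarrow> real) \<Rightarrow> bool" where
  "midpoint_convex_on I f \<longleftrightarrow> (\<forall>x\<in>I. \<forall>y\<in>I. f ((x + y) / 2) \<le> (f x + f y) / 2)"

lemma h_mid_convex_iff_midpoint_convex_on: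
  assumes "h (1/2) = 1/2"
  shows "h_mid_convex h I f \<longleftrightarrow> midpoint_convex_on I f"
  unfolding h_mid_convex_def midpoint_convex_on_def assms by simp

lemma midpoint_convex_on_le_at_midpoints:
  assumes f: "midpoint_convex_on I f" and I: "convex I" and A: "A \<subseteq> I"
    and K: "\<And>x. x \<in> A \<Longrightarrow> f x \<le> K"
    and z: "z \<in> {(x + y) / 2 | x y. x \<in> A \<and> y \<in> A}"
  shows "z \<in> I \<and> f z \<le> K"
proof -
  obtain x y where xy: "x \<in> A" "y \<in> A" "z = (x + y) / 2"
    using z by blast
  with A have "x \<in> I" "y \<in> I"
    by auto
  have "(1/2) *\<^sub>R x + (1/2) *\<^sub>R y \<in> I"
    by (rule convexD[OF I \<open>x \<in> I\<close> \<open>y \<in> I\<close>]) simp_all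
  then have "z \<in> I"
    by (simp add: xy(3) add_divide_distrib)
  have "f z \<le> (f x + f y) / 2"
    using f \<open>x \<in> I\<close> \<open>y \<in> I\<close> unfolding midpoint_convex_on_def xy(3) by blast
  then have "f z \<le> K"
    using K[OF xy(1)] K[OF xy(2)] by simp
  with \<open>z \<in> I\<close> show ?thesis
    by blast
qed

lemma midpoint_convex_on_dyadic:
  assumes f: "midpoint_convex_on I f" and I: "convex I" and x: "x \<in> I" and u: "u \<in> I"
  shows "f ((1 - (1/2)^n) * x + (1/2)^n * u) \<le> (1 - (1/2)^n) * f x + (1/2)^n * f u"
proof (induction n)
  case 0
  show ?case by simp
next
  case (Suc n)
  define t :: real where "t = (1/2)^n"
  define q where "q = (1 - t) * x + t * u"
  have half: "(1/2::real)^Suc n = t / 2"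
    by (simp add: t_def)
  have "q \<in> I"
    using convexD_alt[OF I x u, of t] by (simp add: q_def t_def power_le_one)
  have mid: "(1 - t / 2) * x + t / 2 * u = (x + q) / 2"
    by (simp add: q_def field_simps)
  have "f ((1 - t / 2) * x + t / 2 * u) \<le> (f x + f q) / 2"
    unfolding mid using f x \<open>q \<in> I\<close> unfolding midpoint_convex_on_def by blast
  also have "\<dots> \<le> (f x + ((1 - t) * f x + t * f u)) / 2"
    using Suc.IH by (simp add: q_def t_def)
  also have "\<dots> = (1 - t / 2) * f x + t / 2 * f u"
    by (simp add: field_simps)
  finally show ?case
    unfolding half .
qed

lemma midpoint_convex_on_le_on_shrunk_ball:
  assumes f: "midpoint_convex_on I f" and I: "convex I" and x: "x \<in> I"
    and ball: "ball c d \<subseteq> I" and K: "\<And>u. u \<in> ball c d \<Longrightarrow> f u \<le> K"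
    and y: "y \<in> ball ((1 - (1/2)^n) * x + (1/2)^n * c) ((1/2)^n * d)"
  shows "y \<in> I \<and> f y \<le> (1 - (1/2)^n) * f x + (1/2)^n * K"
proof -
  define t :: real where "t = (1/2)^n"
  have t: "0 < t" "t \<le> 1"
    by (simp_all add: t_def power_le_one)
  define u where "u = c + (y - ((1 - t) * x + t * c)) / t"
  have "dist c u = dist ((1 - t) * x + t * c) y / t"
    using t by (simp add: u_def dist_real_def abs_minus_commute)
  then have u: "u \<in> ball c d"
    using y t by (simp add: t_def[symmetric] pos_divide_less_eq mult.commute)
  have y_eq: "y = (1 - t) * x + t * u"
    using t by (simp add: u_def field_simps)
  have "y \<in> I"
    using convexD_alt[OF I x, of u t] u ball t by (auto simp: y_eq)
  have "f y \<le> (1 - t) * f x + t * f u"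
    using midpoint_convex_on_dyadic[OF f I x, of u n] u ball by (auto simp: y_eq t_def)
  also have "\<dots> \<le> (1 - t) * f x + t * K"
    using K[OF u] t by simp
  finally show ?thesis
    using \<open>y \<in> I\<close> by (simp add: t_def)
qed

lemma midpoint_convex_on_isCont_if_bounded_above_near:
  assumes f: "midpoint_convex_on I f" and I: "convex I"
    and "0 < d" and ball: "ball x0 d \<subseteq> I" and K: "\<And>y. y \<in> ball x0 d \<Longrightarrow> f y \<le> K"
  shows "isCont f x0"
proof -
  have x0: "x0 \<in> I"
    using ball \<open>0 < d\<close> by auto
  have osc: "\<bar>f y - f x0\<bar> \<le> (1/2)^n * (K - f x0)" if y: "dist y x0 < (1/2)^n * d" for y n
  proof -
    let ?t = "(1/2::real)^n"
    have centre: "(1 - ?t) * x0 + ?t * x0 = x0"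
      by (simp add: algebra_simps)
    have shrunk: "z \<in> I \<and> f z \<le> (1 - ?t) * f x0 + ?t * K" if "dist z x0 < ?t * d" for z
      using midpoint_convex_on_le_on_shrunk_ball[OF f I x0 ball K, of z n] that centre
      by (simp add: dist_commute)
    \<comment> \<open>By midpoint convexity at x0, an upper bound at 2 x0 - y gives a lower bound at y.\<close>
    have "dist (2 * x0 - y) x0 < ?t * d"
      using y by (simp add: dist_real_def abs_minus_commute)
    note shrunk = shrunk[OF y] shrunk[OF this]
    have "f ((y + (2 * x0 - y)) / 2) \<le> (f y + f (2 * x0 - y)) / 2"
      using f shrunk unfolding midpoint_convex_on_def by blast
    then show ?thesis
      unfolding abs_le_iff using shrunk by (auto simp: algebra_simps)
  qed
  show "isCont f x0"
    unfolding continuous_at_eps_delta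
  proof (intro allI impI)
    fix e :: real
    assume "0 < e"
    have "f x0 \<le> K"
      using K \<open>0 < d\<close> by simp
    obtain n where n: "(1/2::real)^n < e / (K - f x0 + 1)"
      using real_arch_pow_inv[of "e / (K - f x0 + 1)" "1/2"] \<open>0 < e\<close> \<open>f x0 \<le> K\<close> by auto
    have "(1/2)^n * (K - f x0) < e"
    proof -
      have "(1/2)^n * (K - f x0) \<le> (1/2)^n * (K - f x0 + 1)"
        by simp
      also have "\<dots> < e"
        using n \<open>f x0 \<le> K\<close> by (simp add: pos_less_divide_eq)
      finally show ?thesis .
    qed
    then show "\<exists>\<delta>>0. \<forall>y. dist y x0 < \<delta> \<longrightarrow> dist (f y) (f x0) < e"
      using osc \<open>0 < d\<close> by (intro exI[of _ "(1/2)^n * d"]) (auto simp: dist_real_def intro: le_less_trans)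
  qed
qed

lemma midpoint_convex_on_bounded_above_near:
  assumes f: "midpoint_convex_on I f" and I: "convex I" "open I"
    and "0 < d" and ball: "ball c d \<subseteq> I" and K: "\<And>u. u \<in> ball c d \<Longrightarrow> f u \<le> K"
    and x0: "x0 \<in> I"
  shows "\<exists>d'>0. \<exists>K'. ball x0 d' \<subseteq> I \<and> (\<forall>y\<in>ball x0 d'. f y \<le> K')"
proof -
  \<comment> \<open>p n is the centre of the homothety with ratio 2^-n that maps c to x0.\<close>
  define p where "p n = (x0 - (1/2)^n * c) / (1 - (1/2)^n)" for n :: nat
  have "p \<longlonglongrightarrow> (x0 - 0 * c) / (1 - 0)"
    unfolding p_def by (intro tendsto_intros) simp_all
  then have "\<forall>\<^sub>F n in sequentially. p n \<in> I"
    using I(2) x0 by (simp add: topological_tendstoD)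
  then obtain N where "\<forall>n\<ge>N. p n \<in> I"
    unfolding eventually_sequentially by blast
  then have "p (Suc N) \<in> I"
    by simp
  define t :: real where "t = (1/2)^Suc N"
  have "t < 1"
    using power_le_one[of "1/2::real" N] by (simp add: t_def)
  moreover have "p (Suc N) = (x0 - t * c) / (1 - t)"
    by (simp add: p_def t_def)
  ultimately have centre: "(1 - t) * p (Suc N) + t * c = x0"
    by simp
  note shrunk = midpoint_convex_on_le_on_shrunk_ball[OF f I(1) \<open>p (Suc N) \<in> I\<close> ball K]
  show ?thesis
  proof (intro exI conjI ballI subsetI)
    show "0 < (1/2)^Suc N * d"
      using \<open>0 < d\<close> by simp
  next
    fix y assume "y \<in> ball x0 ((1/2)^Suc N * d)"
    then show "y \<in> I" and "f y \<le> (1 - t) * f (p (Suc N)) + t * K"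
      using shrunk[of y "Suc N"] centre unfolding t_def by simp_all
  qed
qed

lemma midpoint_convex_on_continuous_on:
  assumes f: "midpoint_convex_on I f" and I: "convex I" "open I"
    and "0 < d" "ball c d \<subseteq> I" "\<And>u. u \<in> ball c d \<Longrightarrow> f u \<le> K"
  shows "continuous_on I f"
proof (intro continuous_at_imp_continuous_on ballI)
  fix x assume "x \<in> I"
  then obtain d' K' where "0 < d'" "ball x d' \<subseteq> I" "\<And>y. y \<in> ball x d' \<Longrightarrow> f y \<le> K'"
    using midpoint_convex_on_bounded_above_near[OF f I assms(4-6)] by blast
  then show "isCont f x"
    by (rule midpoint_convex_on_isCont_if_bounded_above_near[OF f I(1)])
qed

lemma emeasure_le_if_emeasure_Int_ball_le:
  fixes A T :: "'a::euclidean_space set" and q :: ennreal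
  assumes A: "A \<in> sets lebesgue" and T: "open T" "A \<subseteq> T"
    and ball_le: "\<And>c r. 0 < r \<Longrightarrow> ball c r \<subseteq> T \<Longrightarrow>
      emeasure lebesgue (A \<inter> ball c r) \<le> q * emeasure lebesgue (ball c r)"
  shows "emeasure lebesgue A \<le> q * emeasure lebesgue T"
proof -
  define K where "K = {(c, r). 0 < r \<and> ball c r \<subseteq> T}"
  have fine: "\<exists>i. i \<in> K \<and> x \<in> ball (fst i) (snd i) \<and> snd i < d" if "x \<in> A" "0 < d" for x d
  proof -
    obtain e where "0 < e" "ball x e \<subseteq> T"
      using T \<open>x \<in> A\<close> openE by blast
    then show ?thesis
      using \<open>0 < d\<close> by (intro exI[of _ "(x, min e d / 2)"]) (auto simp: K_def)
  qed
  obtain C where C: "countable C" "C \<subseteq> K"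
    and disjnt: "pairwise (\<lambda>i j. disjnt (ball (fst i) (snd i)) (ball (fst j) (snd j))) C"
    and null: "negligible (A - (\<Union>i\<in>C. ball (fst i) (snd i)))"
    using Vitali_covering_theorem_balls[of A K fst snd, OF fine] by blast
  define B :: "'a \<times> real \<Rightarrow> 'a set" where "B i = ball (fst i) (snd i)" for i
  have disj: "disjoint_family_on B C"
    using disjnt by (auto simp: disjoint_family_on_def pairwise_def disjnt_def B_def)
  have B_sets: "B i \<in> sets lebesgue" for i
    by (simp add: B_def)
  have AB_sets: "A \<inter> B i \<in> sets lebesgue" for i
    using A B_sets by blast
  have U_sets: "(\<Union>i\<in>C. A \<inter> B i) \<in> sets lebesgue"
    using AB_sets C(1) by (intro sets.countable_UN'')
  have N_null: "A - \<Union>(B ` C) \<in> null_sets lebesgue"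
    using null by (simp add: negligible_iff_null_sets B_def)
  have "emeasure lebesgue A \<le> emeasure lebesgue ((\<Union>i\<in>C. A \<inter> B i) \<union> (A - \<Union>(B ` C)))"
    using U_sets N_null by (intro emeasure_mono) auto
  also have "\<dots> = emeasure lebesgue (\<Union>i\<in>C. A \<inter> B i)"
    using U_sets N_null by (rule emeasure_Un_null_set)
  also have "\<dots> = (\<integral>\<^sup>+i. emeasure lebesgue (A \<inter> B i) \<partial>count_space C)"
  proof (rule emeasure_UN_countable[OF AB_sets C(1)])
    show "disjoint_family_on (\<lambda>i. A \<inter> B i) C"
      using disj unfolding disjoint_family_on_def by blast
  qed
  also have "\<dots> \<le> (\<integral>\<^sup>+i. q * emeasure lebesgue (B i) \<partial>count_space C)"
    using C(2) ball_le by (intro nn_integral_mono) (force simp: K_def B_def)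
  also have "\<dots> = q * emeasure lebesgue (\<Union>(B ` C))"
    by (simp add: nn_integral_cmult emeasure_UN_countable[OF B_sets C(1) disj])
  also have "\<dots> \<le> q * emeasure lebesgue T"
    using C(2) T(1) by (intro mult_left_mono emeasure_mono) (force simp: K_def B_def)+
  finally show ?thesis .
qed

lemma exists_ball_measure_Int_gt:
  fixes A :: "'a::euclidean_space set"
  assumes A: "A \<in> lmeasurable" "0 < measure lebesgue A" and \<theta>: "\<theta> < 1"
  shows "\<exists>c r. 0 < r \<and> \<theta> * measure lebesgue (ball c r) < measure lebesgue (A \<inter> ball c r)"
proof (rule ccontr)
  assume "\<not> ?thesis"
  then have sparse: "measure lebesgue (A \<inter> ball c r) \<le> \<theta> * measure lebesgue (ball c r)"
    if "0 < r" for c r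
    using that by (meson not_less)
  define m where "m = measure lebesgue A"
  define \<epsilon> where "\<epsilon> = (1 - \<theta>) * m"
  have "0 < m" "0 < \<epsilon>"
    using A \<theta> by (simp_all add: m_def \<epsilon>_def)
  obtain T where T: "open T" "A \<subseteq> T" "T - A \<in> lmeasurable"
    "emeasure lebesgue (T - A) < ennreal \<epsilon>"
    using sets_lebesgue_outer_open[of A \<epsilon>] A \<open>0 < \<epsilon>\<close> by (auto simp: fmeasurable_def)
  have "ennreal m = emeasure lebesgue A"
    using A by (simp add: m_def emeasure_eq_measure2)
  also have "\<dots> \<le> ennreal \<theta> * emeasure lebesgue T"
  proof (rule emeasure_le_if_emeasure_Int_ball_le)
    fix c :: 'a and r :: real
    assume "0 < r"
    have "A \<inter> ball c r \<in> lmeasurable"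
      using A by (intro fmeasurable_Int_fmeasurable) auto
    then have "emeasure lebesgue (A \<inter> ball c r) \<le> ennreal (\<theta> * measure lebesgue (ball c r))"
      using sparse[OF \<open>0 < r\<close>] by (simp add: emeasure_eq_measure2 ennreal_leI)
    then show "emeasure lebesgue (A \<inter> ball c r) \<le> ennreal \<theta> * emeasure lebesgue (ball c r)"
      by (simp add: ennreal_mult'' emeasure_eq_measure2)
  qed (use A T in \<open>auto simp: fmeasurable_def\<close>)
  also have "\<dots> \<le> ennreal \<theta> * (emeasure lebesgue A + emeasure lebesgue (T - A))"
    using A T emeasure_subadditive[of A lebesgue "T - A"]
    by (intro mult_left_mono) (auto simp: fmeasurable_def Un_absorb1)
  also have "\<dots> \<le> ennreal \<theta> * ennreal (m + \<epsilon>)"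
    using A(1) T(4) \<open>0 < m\<close> \<open>0 < \<epsilon>\<close>
    by (intro mult_left_mono) (auto simp: m_def emeasure_eq_measure2 intro!: add_mono)
  also have "\<dots> = ennreal (\<theta> * (m + \<epsilon>))"
    using \<open>0 < m\<close> \<open>0 < \<epsilon>\<close> by (simp add: ennreal_mult'')
  finally have "m \<le> \<theta> * (m + \<epsilon>)"
    using \<open>0 < m\<close> by (auto simp: ennreal_le_iff2)
  moreover have "\<theta> * (m + \<epsilon>) = m - (1 - \<theta>)\<^sup>2 * m"
    by (simp add: \<epsilon>_def power2_eq_square algebra_simps)
  moreover have "0 < (1 - \<theta>)\<^sup>2 * m"
    using \<theta> \<open>0 < m\<close> by simp
  ultimately show False
    by linarith
qed

lemma measure_lebesgue_ball_real:
  fixes c :: real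
  assumes "0 \<le> r"
  shows "measure lebesgue (ball c r) = 2 * r"
  using assms by (simp add: ball_eq_greaterThanLessThan)

lemma sets_lebesgue_reflection:
  fixes S :: "real set"
  assumes "S \<in> sets lebesgue"
  shows "(\<lambda>x. s - x) ` S \<in> sets lebesgue"
proof -
  have "(\<lambda>x. s - x) \<in> lebesgue \<rightarrow>\<^sub>M lebesgue"
    using lebesgue_affine_measurable[of "\<lambda>_. -1" s] by simp
  then have "(\<lambda>x. s - x) -` S \<in> sets lebesgue"
    using measurable_sets[of _ lebesgue lebesgue S] assms by simp
  moreover have "(\<lambda>x. s - x) ` S = (\<lambda>x. s - x) -` S"
  proof (rule set_eqI)
    fix x
    show "x \<in> (\<lambda>x. s - x) ` S \<longleftrightarrow> x \<in> (\<lambda>x. s - x) -` S"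
      using image_eqI[of x "\<lambda>x. s - x" "s - x" S] by auto
  qed
  ultimately show ?thesis
    by simp
qed

lemma emeasure_lebesgue_reflection:
  fixes S :: "real set"
  shows "emeasure lebesgue ((\<lambda>x. s - x) ` S) = emeasure lebesgue S"
  using emeasure_lebesgue_affine[of "-1" s S] by simp

lemma ball_subset_midpoints_if_measure_ge:
  fixes A :: "real set"
  assumes A: "A \<in> sets lebesgue" and "0 < r"
    and dense: "r + 2 * \<delta> \<le> measure lebesgue (A \<inter> ball c r)"
  shows "ball c \<delta> \<subseteq> {(x + y) / 2 | x y. x \<in> A \<and> y \<in> A}"
proof
  fix z assume z: "z \<in> ball c \<delta>"
  show "z \<in> {(x + y) / 2 | x y. x \<in> A \<and> y \<in> A}"
  proof (rule ccontr)
    assume no_midpoint: "z \<notin> {(x + y) / 2 | x y. x \<in> A \<and> y \<in> A}"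
    define A' where "A' = A \<inter> ball c r"
    define R where "R = (\<lambda>x. 2 * z - x) ` A'"
    have A': "A' \<in> lmeasurable"
      unfolding A'_def by (rule fmeasurableI2[OF lmeasurable_ball]) (use A in auto)
    have emeasure_R: "emeasure lebesgue R = emeasure lebesgue A'"
      unfolding R_def by (rule emeasure_lebesgue_reflection)
    then have measure_R: "measure lebesgue R = measure lebesgue A'"
      by (simp add: measure_def)
    have "R \<in> sets lebesgue"
      unfolding R_def using A' by (intro sets_lebesgue_reflection fmeasurableD)
    with A' emeasure_R have R: "R \<in> lmeasurable"
      by (metis fmeasurable_def mem_Collect_eq)
    have "x \<notin> A \<or> 2 * z - x \<notin> A" for x
    proof (rule ccontr)
      assume "\<not> (x \<notin> A \<or> 2 * z - x \<notin> A)"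
      then have "z \<in> {(x + y) / 2 | x y. x \<in> A \<and> y \<in> A}"
        by (intro CollectI exI[of _ x] exI[of _ "2 * z - x"]) simp
      with no_midpoint show False ..
    qed
    then have "A' \<inter> R = {}"
      by (auto simp: A'_def R_def)
    then have "2 * measure lebesgue A' = measure lebesgue (A' \<union> R)"
      using measure_Un3[OF A' R] measure_R by simp
    also have "\<dots> \<le> measure lebesgue (ball c (r + 2 * dist z c))"
    proof (rule measure_mono_fmeasurable)
      have "2 * z - x \<in> ball c (r + 2 * dist z c)" if "x \<in> ball c r" for x
        using that unfolding mem_ball dist_real_def by (smt (verit))
      moreover have "ball c r \<subseteq> ball c (r + 2 * dist z c)"
        by (simp add: subset_ball)
      ultimately show "A' \<union> R \<subseteq> ball c (r + 2 * dist z c)"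
        by (auto simp: A'_def R_def)
    qed (use A' R in \<open>simp_all add: fmeasurableD\<close>)
    also have "\<dots> = 2 * r + 4 * dist z c"
      using \<open>0 < r\<close> measure_lebesgue_ball_real[of "r + 2 * dist z c" c] by simp
    finally have "2 * measure lebesgue A' \<le> 2 * r + 4 * dist z c" .
    moreover have "dist z c < \<delta>"
      using z by (simp add: dist_commute)
    ultimately show False
      using dense unfolding A'_def by linarith
  qed
qed

lemma exists_ball_subset_midpoints:
  fixes A :: "real set"
  assumes "A \<in> lmeasurable" and "0 < measure lebesgue A"
  shows "\<exists>c \<delta>. 0 < \<delta> \<and> ball c \<delta> \<subseteq> {(x + y) / 2 | x y. x \<in> A \<and> y \<in> A}"
proof -
  obtain c r where "0 < r" and dense: "3/4 * measure lebesgue (ball c r) < measure lebesgue (A \<inter> ball c r)"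
    using exists_ball_measure_Int_gt[OF assms, of "3/4"] by auto
  moreover have "measure lebesgue (ball c r) = 2 * r"
    using \<open>0 < r\<close> by (intro measure_lebesgue_ball_real) simp
  ultimately have "r + 2 * (r / 4) \<le> measure lebesgue (A \<inter> ball c r)"
    by simp
  then show ?thesis
    using ball_subset_midpoints_if_measure_ge[OF fmeasurableD[OF assms(1)] \<open>0 < r\<close>] \<open>0 < r\<close>
    by (intro exI[of _ c] exI[of _ "r / 4"]) simp
qed

theorem theorem3p4:
  fixes h f :: "real \<Rightarrow> real" and a b :: real and M :: "real set"
  assumes h_nonneg: "\<And>t. h t \<ge> 0"
    and h_supermult: "super_multiplicative h"
    and h_ge: "\<And>t. h t \<ge> t"
    and h_one: "h 1 = 1"
    and f_hmid: "h_mid_convex h {a<..<b} f"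
    and M_sub: "M \<subseteq> {a<..<b}"
    and M_meas: "M \<in> sets lebesgue"
    and M_pos: "emeasure lebesgue M > 0"
    and f_bdd: "\<exists>K. \<forall>x\<in>M. f x \<le> K"
  shows "continuous_on {a<..<b} f"
proof -
  have f: "midpoint_convex_on {a<..<b} f"
    using f_hmid super_multiplicative_half_eq[OF h_supermult h_ge h_one]
    by (simp add: h_mid_convex_iff_midpoint_convex_on)
  have M: "M \<in> lmeasurable"
    using M_sub M_meas by (intro bounded_set_imp_lmeasurable bounded_subset[OF bounded_Ioo])
  then have "0 < measure lebesgue M"
    using M_pos by (simp add: emeasure_eq_measure2)
  then obtain c \<delta> where "0 < \<delta>"
    and midpoints: "ball c \<delta> \<subseteq> {(x + y) / 2 | x y. x \<in> M \<and> y \<in> M}"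
    using exists_ball_subset_midpoints[OF M] by blast
  obtain K where K: "\<And>x. x \<in> M \<Longrightarrow> f x \<le> K"
    using f_bdd by blast
  have "ball c \<delta> \<subseteq> {a<..<b}" and "\<And>u. u \<in> ball c \<delta> \<Longrightarrow> f u \<le> K"
    using midpoint_convex_on_le_at_midpoints[OF f convex_real_interval(8) M_sub K] midpoints by blast+
  then show ?thesis
    using midpoint_convex_on_continuous_on[OF f convex_real_interval(8) open_greaterThanLessThan]
      \<open>0 < \<delta>\<close> by blast
qed

end
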